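(* Let $K,L,A$ be as in the context and suppose the $\lambda_t$ and $\Psi_i$ form an $A$-scaffold on $L$ of tolerance $\mathfrak{T}\ge1$ with shift parameters $b_1,\dots,b_n$. Let $s\in\mathbb{S}_{p^n}$ and $t\in\mathbb{S}_{p^n}(h)$. Let $\Psi$ be any element of $\Upsilon^{(s)}$, and set $\Phi=\pi^{-w(s)}\Psi$. Then: (i) If $s\preceq\mathfrak{a}(t)$, then there is a unit $y_{\Phi,t}\in\mathfrak{O}_K^\times$ such that $$\Phi\cdot\lambda_t\equiv\pi^{\epsilon(s,t)}y_{\Phi,t}\lambda_{H(s,t)}\pmod{\pi^{\epsilon(s,t)}\lambda_{H(s,t)}\mathfrak{P}_L^{\mathfrak{T}}}.$$ In particular, $v_L(\Phi\cdot\lambda_t)=H(s,t)$ if $s\preceq\mathfrak{a}(t)$ and $\epsilon(s,t)=0$, and $v_L(\Phi\cdot\lambda_t)=H(s,t)+p^n$ if $s\preceq\mathfrak{a}(t)$ and $\epsilon(s,t)=1$. (ii) If $s\not\preceq\mathfrak{a}(t)$, then $v_L(\Phi\cdot\lambda_t)\ge H(s,b)+\mathfrak{T}+t-b$.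
   Context: Let $K$ be a field complete with respect to a discrete valuation, with residue field of characteristic $p>0$ (not necessarily perfect). Let $L/K$ be totally ramified of degree $p^n$; $v_K,v_L$ normalized valuations, $\mathfrak{O}_K$, $\mathfrak{P}_L$ as usual; $\pi$ a fixed uniformizer of $K$. Let $A$ be a $K$-algebra with $\dim_K A=p^n$ acting $K$-linearly on $L$. Let $\mathbb{S}_{p^n}=\{0,\dots,p^n-1\}$, $s=\sum_{i=1}^n s_{(n-i)}p^{n-i}$ with digits in $\{0,\dots,p-1\}$, $s\preceq t$ iff $s_{(n-i)}\le t_{(n-i)}$ for all $i$. Given integers $b_1,\dots,b_n$ prime to $p$, $\mathfrak{b}(s)=\sum_i s_{(n-i)}p^{n-i}b_i$; for $t\in\mathbb{Z}$, $\mathfrak{a}(t)\in\mathbb{S}_{p^n}$ is the unique element with $\mathfrak{b}(\mathfrak{a}(t))\equiv-t\pmod{p^n}$. An $A$-scaffold on $L$ of tolerance $\mathfrak{T}\ge1$ (possibly $\infty$) with shift parameters $b_1,\dots,b_n$ consists of: (i) $\lambda_t\in L$ ($t\in\mathbb{Z}$) with $v_L(\lambda_t)=t$ and $\lambda_{t_1}\lambda_{t_2}^{-1}\in K$ whenever $t_1\equiv t_2\pmod{p^n}$; (ii) $\Psi_1,\dots,\Psi_n\in A$ with $\Psi_i\cdot1=0$ such that for each $i,t$ there is $u_{i,t}\in\mathfrak{O}_K^\times$ with $\Psi_i\cdot\lambda_t\equiv u_{i,t}\lambda_{t+p^{n-i}b_i}$ if $\mathfrak{a}(t)_{(n-i)}\ge1$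 and $\equiv0$ if $\mathfrak{a}(t)_{(n-i)}=0$, modulo $\lambda_{t+p^{n-i}b_i}\mathfrak{P}_L^{\mathfrak{T}}$ (equalities if $\mathfrak{T}=\infty$). For $s\in\mathbb{S}_{p^n}$, $\Upsilon^{(s)}$ is the set of monomials (words) in the not necessarily commuting elements $\Psi_1,\dots,\Psi_n$ in which, for each $i$, the exponents of $\Psi_i$ sum to $s_{(n-i)}$. Fix $h\in\mathbb{Z}$, $\mathbb{S}_{p^n}(h)=\{t\in\mathbb{Z}:h\le t<h+p^n\}$, $b\in\mathbb{S}_{p^n}(h)$ the unique element with $\mathfrak{a}(b)=p^n-1$, $r:\mathbb{Z}\to\mathbb{S}_{p^n}$ reduction mod $p^n$. For $s\in\mathbb{S}_{p^n}$, $t\in\mathbb{S}_{p^n}(h)$: $D(s,t)=\lfloor(\mathfrak{b}(s)+t-h)/p^n\rfloor$, $H(s,t)=h+r(\mathfrak{b}(s)+t-h)$, $d(s)=D(s,b)$, $w(s)=\min\{d(u)-d(u-s):u\in\mathbb{S}_{p^n},u\succeq s\}$, and, when $s\preceq\mathfrak{a}(t)$, $\epsilon(s,t)=D(s,t)-w(s)$. *)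

theory Defs
  imports Main "HOL-Library.Extended_Nat" "HOL-Computational_Algebra.Primes"
begin

text \<open>L is modelled as a field type 'L; K is a subfield of L given as a set;
  v is the normalized valuation v_L on the nonzero elements of L (its value at 0
  is irrelevant; every statement about v x is guarded by x \<noteq> 0).\<close>

definition subfield_of :: "'L::field set \<Rightarrow> bool" where
  "subfield_of K \<longleftrightarrow> 0 \<in> K \<and> 1 \<in> K \<and>
     (\<forall>x\<in>K. \<forall>y\<in>K. x + y \<in> K \<and> x * y \<in> K) \<and>
     (\<forall>x\<in>K. - x \<in> K \<and> inverse x \<in> K)"

definition normalized_discrete_valuation :: "('L::field \<Rightarrow> int) \<Rightarrow> bool" where
  "normalized_discrete_valuation v \<longleftrightarrow>
     (\<forall>x y. x \<noteq> 0 \<longrightarrow> y \<noteq> 0 \<longrightarrow> v (x * y) = v x + v y) \<and>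
     (\<forall>x y. x \<noteq> 0 \<longrightarrow> y \<noteq> 0 \<longrightarrow> x + y \<noteq> 0 \<longrightarrow> min (v x) (v y) \<le> v (x + y)) \<and>
     (\<exists>x. x \<noteq> 0 \<and> v x = 1)"

definition complete_subfield :: "'L::field set \<Rightarrow> ('L \<Rightarrow> int) \<Rightarrow> bool" where
  "complete_subfield K v \<longleftrightarrow>
     (\<forall>x::nat \<Rightarrow> 'L. (\<forall>m. x m \<in> K) \<longrightarrow>
        (\<forall>N::int. \<exists>M. \<forall>m\<ge>M. \<forall>k\<ge>M. x m - x k = 0 \<or> N \<le> v (x m - x k)) \<longrightarrow>
        (\<exists>l\<in>K. \<forall>N::int. \<exists>M. \<forall>m\<ge>M. x m - l = 0 \<or> N \<le> v (x m - l)))"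

definition K_independent :: "'L::field set \<Rightarrow> ('L \<Rightarrow> 'b::ring_1) \<Rightarrow> 'b set \<Rightarrow> bool" where
  "K_independent K alg B \<longleftrightarrow>
     (\<forall>c. (\<forall>x\<in>B. c x \<in> K) \<longrightarrow> (\<Sum>x\<in>B. alg (c x) * x) = 0 \<longrightarrow> (\<forall>x\<in>B. c x = 0))"

definition K_spanning :: "'L::field set \<Rightarrow> ('L \<Rightarrow> 'b::ring_1) \<Rightarrow> 'b set \<Rightarrow> bool" where
  "K_spanning K alg B \<longleftrightarrow>
     (\<forall>a. \<exists>c. (\<forall>x\<in>B. c x \<in> K) \<and> a = (\<Sum>x\<in>B. alg (c x) * x))"

definition has_K_dim :: "'L::field set \<Rightarrow> ('L \<Rightarrow> 'b::ring_1) \<Rightarrow> nat \<Rightarrow> bool" where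
  "has_K_dim K alg d \<longleftrightarrow>
     (\<exists>B. finite B \<and> card B = d \<and> K_independent K alg B \<and> K_spanning K alg B)"

text \<open>Standing assumptions: K complete discretely valued with residue characteristic p,
  L/K totally ramified of degree p^n, v = v_L normalized, v_K = v_L / p^n,
  \<pi> a uniformizer of K.\<close>
definition extension_setting ::
  "'L::field set \<Rightarrow> ('L \<Rightarrow> int) \<Rightarrow> nat \<Rightarrow> nat \<Rightarrow> 'L \<Rightarrow> bool" where
  "extension_setting K v p n \<pi> \<longleftrightarrow>
     prime p \<and> subfield_of K \<and> normalized_discrete_valuation v \<and>
     complete_subfield K v \<and>
     (of_nat p = (0::'L) \<or> 1 \<le> v (of_nat p)) \<and>
     has_K_dim K (\<lambda>x. x) (p ^ n) \<and>
     (\<forall>x\<in>K. x \<noteq> 0 \<longrightarrow> int (p ^ n) dvd v x) \<and>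
     \<pi> \<in> K \<and> \<pi> \<noteq> 0 \<and> v \<pi> = int (p ^ n)"

definition algebra_action ::
  "'L::field set \<Rightarrow> nat \<Rightarrow> ('L \<Rightarrow> 'A::ring_1) \<Rightarrow> ('A \<Rightarrow> 'L \<Rightarrow> 'L) \<Rightarrow> bool" where
  "algebra_action K N alg act \<longleftrightarrow>
     (\<forall>x\<in>K. \<forall>y\<in>K. alg (x + y) = alg x + alg y \<and> alg (x * y) = alg x * alg y) \<and>
     alg 1 = 1 \<and>
     (\<forall>x\<in>K. \<forall>a. alg x * a = a * alg x) \<and>
     has_K_dim K alg N \<and>
     (\<forall>a b x. act (a + b) x = act a x + act b x) \<and>
     (\<forall>a b x. act (a * b) x = act a (act b x)) \<and>
     (\<forall>x. act 1 x = x) \<and>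
     (\<forall>a x y. act a (x + y) = act a x + act a y) \<and>
     (\<forall>c\<in>K. \<forall>a x. act a (c * x) = c * act a x) \<and>
     (\<forall>c\<in>K. \<forall>x. act (alg c) x = c * x)"

definition unitsOK :: "'L::field set \<Rightarrow> ('L \<Rightarrow> int) \<Rightarrow> 'L set" where
  "unitsOK K v = {u. u \<in> K \<and> u \<noteq> 0 \<and> v u = 0}"

text \<open>x \<equiv> y  (mod m \<P>_L^T), T possibly \<infinity> (then equality). m is nonzero.\<close>
definition cong_T :: "('L::field \<Rightarrow> int) \<Rightarrow> enat \<Rightarrow> 'L \<Rightarrow> 'L \<Rightarrow> 'L \<Rightarrow> bool" where
  "cong_T v T x y m \<longleftrightarrow>
     (case T of \<infinity> \<Rightarrow> x = y
              | enat k \<Rightarrow> x - y = 0 \<or> v m + int k \<le> v (x - y))"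

definition val_ge_T :: "('L::field \<Rightarrow> int) \<Rightarrow> 'L \<Rightarrow> int \<Rightarrow> enat \<Rightarrow> bool" where
  "val_ge_T v x c T \<longleftrightarrow>
     (case T of \<infinity> \<Rightarrow> x = 0 | enat k \<Rightarrow> x = 0 \<or> c + int k \<le> v x)"

definition digit :: "nat \<Rightarrow> nat \<Rightarrow> nat \<Rightarrow> nat" where
  "digit p j s = (s div p ^ j) mod p"

definition prec :: "nat \<Rightarrow> nat \<Rightarrow> nat \<Rightarrow> nat \<Rightarrow> bool" where
  "prec p n s t \<longleftrightarrow> (\<forall>j<n. digit p j s \<le> digit p j t)"

definition frakb :: "nat \<Rightarrow> nat \<Rightarrow> (nat \<Rightarrow> int) \<Rightarrow> nat \<Rightarrow> int" where
  "frakb p n bs s = (\<Sum>i=1..n. int (digit p (n - i) s) * int p ^ (n - i) * bs i)"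

definition fraka :: "nat \<Rightarrow> nat \<Rightarrow> (nat \<Rightarrow> int) \<Rightarrow> int \<Rightarrow> nat" where
  "fraka p n bs t = (THE u. u < p ^ n \<and> frakb p n bs u mod int (p ^ n) = (- t) mod int (p ^ n))"

text \<open>The unique b \<in> S_{p^n}(h) with a(b) = p^n - 1.\<close>
definition bpt :: "nat \<Rightarrow> nat \<Rightarrow> (nat \<Rightarrow> int) \<Rightarrow> int \<Rightarrow> int" where
  "bpt p n bs h = (THE x. h \<le> x \<and> x < h + int (p ^ n) \<and> fraka p n bs x = p ^ n - 1)"

definition Dfun :: "nat \<Rightarrow> nat \<Rightarrow> (nat \<Rightarrow> int) \<Rightarrow> int \<Rightarrow> nat \<Rightarrow> int \<Rightarrow> int" where
  "Dfun p n bs h s t = (frakb p n bs s + t - h) div int (p ^ n)"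

definition Hfun :: "nat \<Rightarrow> nat \<Rightarrow> (nat \<Rightarrow> int) \<Rightarrow> int \<Rightarrow> nat \<Rightarrow> int \<Rightarrow> int" where
  "Hfun p n bs h s t = h + (frakb p n bs s + t - h) mod int (p ^ n)"

definition dfun :: "nat \<Rightarrow> nat \<Rightarrow> (nat \<Rightarrow> int) \<Rightarrow> int \<Rightarrow> nat \<Rightarrow> int" where
  "dfun p n bs h s = Dfun p n bs h s (bpt p n bs h)"

definition wfun :: "nat \<Rightarrow> nat \<Rightarrow> (nat \<Rightarrow> int) \<Rightarrow> int \<Rightarrow> nat \<Rightarrow> int" where
  "wfun p n bs h s =
     Min {dfun p n bs h u - dfun p n bs h (u - s) | u. u < p ^ n \<and> prec p n s u}"

definition epsfun :: "nat \<Rightarrow> nat \<Rightarrow> (nat \<Rightarrow> int) \<Rightarrow> int \<Rightarrow> nat \<Rightarrow> int \<Rightarrow> int" where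
  "epsfun p n bs h s t = Dfun p n bs h s t - wfun p n bs h s"

definition scaffold ::
  "'L::field set \<Rightarrow> ('L \<Rightarrow> int) \<Rightarrow> ('A::ring_1 \<Rightarrow> 'L \<Rightarrow> 'L) \<Rightarrow> nat \<Rightarrow> nat \<Rightarrow> (nat \<Rightarrow> int)
     \<Rightarrow> enat \<Rightarrow> (int \<Rightarrow> 'L) \<Rightarrow> (nat \<Rightarrow> 'A) \<Rightarrow> bool" where
  "scaffold K v act p n bs T lam Psi \<longleftrightarrow>
     1 \<le> T \<and>
     (\<forall>i\<in>{1..n}. coprime (bs i) (int p)) \<and>
     (\<forall>t. lam t \<noteq> 0 \<and> v (lam t) = t) \<and>
     (\<forall>t1 t2. t1 mod int (p ^ n) = t2 mod int (p ^ n) \<longrightarrow> lam t1 / lam t2 \<in> K) \<and>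
     (\<forall>i\<in>{1..n}. act (Psi i) 1 = 0) \<and>
     (\<forall>i\<in>{1..n}. \<forall>t. \<exists>u\<in>unitsOK K v.
        cong_T v T (act (Psi i) (lam t))
          (if 1 \<le> digit p (n - i) (fraka p n bs t)
           then u * lam (t + int p ^ (n - i) * bs i) else 0)
          (lam (t + int p ^ (n - i) * bs i)))"

text \<open>\<Upsilon>^(s): words (lists of indices in {1..n}) in which \<Psi>_i occurs s_{(n-i)} times;
  the element of A is the (ordered) product.\<close>
definition Upsilon :: "nat \<Rightarrow> nat \<Rightarrow> (nat \<Rightarrow> 'A::ring_1) \<Rightarrow> nat \<Rightarrow> 'A set" where
  "Upsilon p n Psi s =
     {prod_list (map Psi w) | w. set w \<subseteq> {1..n} \<and>
        (\<forall>i\<in>{1..n}. count_list w i = digit p (n - i) s)}"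

end

theory Submission
  imports Defs
begin

(* Psi_i sends lambda_t to a unit times lambda_(t + p^(n-i) b_i) if the digit a(t)_(n-i) is
   positive, and that digit of a(t) then drops by one; otherwise Psi_i lambda_t has valuation
   >= t + p^(n-i) b_i + T.  Since the valuations of lambda_0, ..., lambda_(p^n-1) are distinct
   modulo p^n, these elements form a K-basis of L in whose coordinates valuations are read off
   termwise; hence Psi_i raises every valuation by at least p^(n-i) b_i and error terms stay
   error terms.  Applying the letters of a word Psi in Upsilon^(s) one at a time, the digits of
   a(t) never run out if s <= a(t), giving Psi lambda_t == u lambda_(t + b(s)) with a unit u;
   otherwise some letter meets a zero digit and v(Psi lambda_t) >= t + b(s) + T.
   Now t + b(s) = H(s,t) + p^n D(s,t), and lambda_(t + b(s)) / lambda_H(s,t) lies in K and has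
   valuation p^n D(s,t), which gives (i).  Part (ii) follows from w(s) <= d(s) - d(0) = d(s)
   (take u = s in the minimum) and H(s,b) + p^n d(s) = b(s) + b. *)

section \<open>Discrete valuations\<close>

definition val_ge :: "('L::field \<Rightarrow> int) \<Rightarrow> int \<Rightarrow> 'L \<Rightarrow> bool" where
  "val_ge v M x \<longleftrightarrow> x = 0 \<or> M \<le> v x"

locale discrete_valuation =
  fixes v :: "'L::field \<Rightarrow> int"
  assumes normalized: "normalized_discrete_valuation v"
begin

lemma v_mult: "x \<noteq> 0 \<Longrightarrow> y \<noteq> 0 \<Longrightarrow> v (x * y) = v x + v y"
  using normalized unfolding normalized_discrete_valuation_def by blast

lemma v_add_ge_min: "x \<noteq> 0 \<Longrightarrow> y \<noteq> 0 \<Longrightarrow> x + y \<noteq> 0 \<Longrightarrow> min (v x) (v y) \<le> v (x + y)"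
  using normalized unfolding normalized_discrete_valuation_def by blast

lemma v_one: "v 1 = 0"
  using v_mult[of 1 1] by simp

lemma v_minus: "x \<noteq> 0 \<Longrightarrow> v (- x) = v x"
proof -
  have "v (-1) = 0" using v_mult[of "-1" "-1"] v_one by simp
  then show "x \<noteq> 0 \<Longrightarrow> v (- x) = v x" using v_mult[of "-1" x] by simp
qed

lemma v_inverse: "x \<noteq> 0 \<Longrightarrow> v (inverse x) = - v x"
  using v_mult[of x "inverse x"] v_one by simp

lemma v_divide: "x \<noteq> 0 \<Longrightarrow> y \<noteq> 0 \<Longrightarrow> v (x / y) = v x - v y"
  by (simp add: divide_inverse v_mult v_inverse)

lemma v_power: "x \<noteq> 0 \<Longrightarrow> v (x ^ k) = int k * v x"
  by (induction k) (auto simp: v_one v_mult algebra_simps)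

lemma v_power_int:
  assumes "x \<noteq> 0"
  shows "v (x powi z) = z * v x"
proof (cases "z \<ge> 0")
  case True
  then show ?thesis using v_power[OF assms, of "nat z"] by (simp add: power_int_def)
next
  case False
  then show ?thesis using assms v_power[of "inverse x" "nat (- z)"] v_inverse[OF assms]
    by (simp add: power_int_def)
qed

lemma v_add_strict:
  assumes "x \<noteq> 0" "y \<noteq> 0" "v x < v y"
  shows "x + y \<noteq> 0 \<and> v (x + y) = v x"
proof
  show xy: "x + y \<noteq> 0"
  proof
    assume "x + y = 0"
    then have "y = - x" by (metis add.commute neg_eq_iff_add_eq_0)
    then show False using assms v_minus by auto
  qed
  have "min (v x) (v y) \<le> v (x + y)" using v_add_ge_min assms xy by blast
  moreover have "min (v (x + y)) (v (- y)) \<le> v ((x + y) + (- y))"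
    using v_add_ge_min[of "x + y" "- y"] xy assms by simp
  ultimately show "v (x + y) = v x" using assms v_minus by auto
qed

lemma v_sum_distinct:
  assumes "finite F" "F \<noteq> {}" "\<And>k. k \<in> F \<Longrightarrow> f k \<noteq> 0" "inj_on (\<lambda>k. v (f k)) F"
  shows "(\<Sum>k\<in>F. f k) \<noteq> 0 \<and> v (\<Sum>k\<in>F. f k) = Min ((\<lambda>k. v (f k)) ` F)"
  using assms
proof (induction F rule: finite_ne_induct)
  case (singleton x)
  then show ?case by simp
next
  case (insert a F)
  have IH: "(\<Sum>k\<in>F. f k) \<noteq> 0" "v (\<Sum>k\<in>F. f k) = Min ((\<lambda>k. v (f k)) ` F)"
    using insert by (auto simp: inj_on_insert)
  obtain k0 where k0: "k0 \<in> F" "Min ((\<lambda>k. v (f k)) ` F) = v (f k0)"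
    using Min_in[of "(\<lambda>k. v (f k)) ` F"] insert
    by (metis (no_types, lifting) finite_imageI image_iff image_is_empty)
  have ne: "v (f a) \<noteq> v (f k0)" using insert k0 by (auto simp: inj_on_def)
  have sum: "(\<Sum>k\<in>insert a F. f k) = f a + (\<Sum>k\<in>F. f k)" using insert by simp
  have min: "Min ((\<lambda>k. v (f k)) ` insert a F) = min (v (f a)) (v (f k0))"
    using insert k0 by (simp add: Min_insert)
  show ?case
  proof (cases "v (f a) < v (f k0)")
    case True
    then show ?thesis using v_add_strict[of "f a" "\<Sum>k\<in>F. f k"] IH k0 insert sum min by auto
  next
    case False
    then have "v (f k0) < v (f a)" using ne by auto
    then show ?thesis using v_add_strict[of "\<Sum>k\<in>F. f k" "f a"] IH k0 insert sum min
      by (auto simp: add.commute)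
  qed
qed

lemma val_ge_0 [simp]: "val_ge v M 0"
  by (simp add: val_ge_def)

lemma val_ge_add: "val_ge v M x \<Longrightarrow> val_ge v M y \<Longrightarrow> val_ge v M (x + y)"
  unfolding val_ge_def using v_add_ge_min[of x y] by fastforce

lemma val_ge_sum: "finite F \<Longrightarrow> (\<And>k. k \<in> F \<Longrightarrow> val_ge v M (f k)) \<Longrightarrow> val_ge v M (\<Sum>k\<in>F. f k)"
  by (induction F rule: finite_induct) (auto intro: val_ge_add)

lemma val_ge_mult: "val_ge v M x \<Longrightarrow> c \<noteq> 0 \<Longrightarrow> val_ge v (v c + M) (c * x)"
  unfolding val_ge_def using v_mult by force

lemma val_ge_mono: "val_ge v M x \<Longrightarrow> M' \<le> M \<Longrightarrow> val_ge v M' x"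
  unfolding val_ge_def by auto

lemma val_ge_T_enat [simp]: "val_ge_T v x c (enat k) \<longleftrightarrow> val_ge v (c + int k) x"
  unfolding val_ge_T_def val_ge_def by simp

lemma val_ge_T_infinity [simp]: "val_ge_T v x c \<infinity> \<longleftrightarrow> x = 0"
  unfolding val_ge_T_def by simp

lemma cong_T_iff_val_ge_T: "cong_T v T x y m \<longleftrightarrow> val_ge_T v (x - y) (v m) T"
  unfolding cong_T_def val_ge_T_def by (cases T) auto

lemma val_ge_T_0 [simp]: "val_ge_T v 0 c T"
  by (cases T) auto

lemma val_ge_T_add: "val_ge_T v x c T \<Longrightarrow> val_ge_T v y c T \<Longrightarrow> val_ge_T v (x + y) c T"
  by (cases T) (auto intro: val_ge_add)

lemma val_ge_T_mult: "val_ge_T v x c T \<Longrightarrow> a \<noteq> 0 \<Longrightarrow> val_ge_T v (a * x) (v a + c) T"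
  by (cases T) (auto dest: val_ge_mult simp: add.assoc)

lemma val_ge_T_mono: "val_ge_T v x c T \<Longrightarrow> c' \<le> c \<Longrightarrow> val_ge_T v x c' T"
  by (cases T) (auto elim: val_ge_mono)

lemma val_ge_T_imp_val_ge: "1 \<le> T \<Longrightarrow> val_ge_T v x c T \<Longrightarrow> val_ge v (c + 1) x"
  by (cases T) (auto simp: one_enat_def elim: val_ge_mono)

lemma cong_T_unit_multiple:
  assumes T: "1 \<le> T" and m: "m \<noteq> 0" and y: "y \<noteq> 0" "v y = 0"
    and cong: "cong_T v T x (y * m) m"
  shows "x \<noteq> 0 \<and> v x = v m"
proof -
  define e where "e = x - y * m"
  have ym: "y * m \<noteq> 0" "v (y * m) = v m" using m y v_mult by auto
  have "val_ge v (v m + 1) e"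
    using val_ge_T_imp_val_ge[OF T] cong unfolding cong_T_iff_val_ge_T e_def by blast
  then have "e = 0 \<or> v (y * m) < v e" using ym unfolding val_ge_def by auto
  moreover have "x = y * m + e" unfolding e_def by simp
  ultimately show ?thesis using v_add_strict[of "y * m" e] ym by (cases "e = 0") auto
qed

end

section \<open>Linear dependence over a subfield\<close>

definition in_K_span :: "'L::field set \<Rightarrow> 'L set \<Rightarrow> 'L \<Rightarrow> bool" where
  "in_K_span K B y \<longleftrightarrow> (\<exists>c. (\<forall>x\<in>B. c x \<in> K) \<and> y = (\<Sum>x\<in>B. c x * x))"

locale subfield =
  fixes K :: "'L::field set"
  assumes subfield: "subfield_of K"
begin

lemma K_0 [simp]: "0 \<in> K" and K_1 [simp]: "1 \<in> K"
  using subfield unfolding subfield_of_def by auto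

lemma K_add [intro]: "x \<in> K \<Longrightarrow> y \<in> K \<Longrightarrow> x + y \<in> K"
  and K_mult [intro]: "x \<in> K \<Longrightarrow> y \<in> K \<Longrightarrow> x * y \<in> K"
  and K_minus [intro]: "x \<in> K \<Longrightarrow> - x \<in> K"
  and K_inverse [intro]: "x \<in> K \<Longrightarrow> inverse x \<in> K"
  using subfield unfolding subfield_of_def by auto

lemma K_diff [intro]: "x \<in> K \<Longrightarrow> y \<in> K \<Longrightarrow> x - y \<in> K"
  using K_add[of x "- y"] K_minus by simp

lemma K_divide [intro]: "x \<in> K \<Longrightarrow> y \<in> K \<Longrightarrow> x / y \<in> K"
  by (simp add: divide_inverse K_mult K_inverse)

lemma K_sum [intro]: "finite F \<Longrightarrow> (\<And>k. k \<in> F \<Longrightarrow> f k \<in> K) \<Longrightarrow> (\<Sum>k\<in>F. f k) \<in> K"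
  by (induction F rule: finite_induct) auto

lemma K_power [intro]: "x \<in> K \<Longrightarrow> x ^ m \<in> K"
  by (induction m) auto

lemma K_power_int [intro]: "x \<in> K \<Longrightarrow> x powi z \<in> K"
  by (auto simp: power_int_def)

lemma in_K_span_diff:
  assumes "in_K_span K B x" "in_K_span K B y"
  shows "in_K_span K B (x - y)"
proof -
  obtain c d where "\<forall>x\<in>B. c x \<in> K" "x = (\<Sum>x\<in>B. c x * x)"
    "\<forall>x\<in>B. d x \<in> K" "y = (\<Sum>x\<in>B. d x * x)"
    using assms unfolding in_K_span_def by blast
  then show ?thesis unfolding in_K_span_def
    by (intro exI[of _ "\<lambda>z. c z - d z"]) (auto simp: sum_subtractf left_diff_distrib)
qed

lemma in_K_span_scale:
  assumes "in_K_span K B x" "a \<in> K"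
  shows "in_K_span K B (a * x)"
proof -
  obtain c where "\<forall>x\<in>B. c x \<in> K" "x = (\<Sum>x\<in>B. c x * x)"
    using assms(1) unfolding in_K_span_def by blast
  then show ?thesis unfolding in_K_span_def using assms(2)
    by (intro exI[of _ "\<lambda>z. a * c z"]) (auto simp: sum_distrib_left mult.assoc)
qed

lemma in_K_span_insert:
  assumes "finite B" "b \<notin> B" "in_K_span K (insert b B) y"
  obtains a r where "a \<in> K" "in_K_span K B r" "y = a * b + r"
proof -
  obtain c where c: "\<forall>x\<in>insert b B. c x \<in> K" "y = (\<Sum>x\<in>insert b B. c x * x)"
    using assms(3) unfolding in_K_span_def by blast
  then have "y = c b * b + (\<Sum>x\<in>B. c x * x)" using assms by simp
  moreover have "in_K_span K B (\<Sum>x\<in>B. c x * x)" unfolding in_K_span_def using c by auto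
  ultimately show ?thesis using that c by blast
qed

lemma K_dependent_insert:
  assumes "finite J" "j0 \<notin> J" "\<forall>j\<in>J. d j \<in> K" "\<forall>j\<in>J. c j \<in> K" "\<exists>j\<in>J. c j \<noteq> 0"
    and rel: "(\<Sum>j\<in>J. c j * (w j - d j * w j0)) = 0"
  shows "\<exists>c'. (\<forall>j\<in>insert j0 J. c' j \<in> K) \<and> (\<Sum>j\<in>insert j0 J. c' j * w j) = 0 \<and>
    (\<exists>j\<in>insert j0 J. c' j \<noteq> 0)"
proof -
  define c' where "c' j = (if j = j0 then - (\<Sum>i\<in>J. c i * d i) else c j)" for j
  have "(\<Sum>j\<in>J. c' j * w j) = (\<Sum>j\<in>J. c j * w j)"
    using assms(2) unfolding c'_def by (intro sum.cong) auto
  then have "(\<Sum>j\<in>insert j0 J. c' j * w j) = (\<Sum>j\<in>J. c j * w j) - (\<Sum>j\<in>J. c j * d j) * w j0"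
    using assms(1,2) unfolding c'_def by simp
  also have "\<dots> = (\<Sum>j\<in>J. c j * (w j - d j * w j0))"
    by (simp add: sum_distrib_right sum_subtractf right_diff_distrib mult.assoc)
  finally have "(\<Sum>j\<in>insert j0 J. c' j * w j) = (\<Sum>j\<in>J. c j * (w j - d j * w j0))" .
  moreover have "\<forall>j\<in>insert j0 J. c' j \<in> K"
    using assms(1,3,4) unfolding c'_def by (auto intro!: K_sum K_mult K_minus)
  moreover have "\<exists>j\<in>insert j0 J. c' j \<noteq> 0" using assms(2,5) unfolding c'_def by auto
  ultimately show ?thesis using rel by auto
qed

(* Gaussian elimination: the coefficient of the new spanning vector b is eliminated using one
   vector w j0 in which it is nonzero. *)

lemma K_span_dependent:
  assumes "finite B" "finite J" "card B < card J" "\<forall>j\<in>J. in_K_span K B (w j)"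
  shows "\<exists>c. (\<forall>j\<in>J. c j \<in> K) \<and> (\<Sum>j\<in>J. c j * w j) = 0 \<and> (\<exists>j\<in>J. c j \<noteq> 0)"
  using assms
proof (induction B arbitrary: J w rule: finite_induct)
  case empty
  then obtain j0 where j0: "j0 \<in> J" by (metis card.empty card_gt_0_iff ex_in_conv)
  have "\<forall>j\<in>J. w j = 0" using empty unfolding in_K_span_def by auto
  then show ?case using j0 by (intro exI[of _ "\<lambda>j. if j = j0 then 1 else 0"]) auto
next
  case (insert b B J w)
  have "\<forall>j\<in>J. \<exists>a r. a \<in> K \<and> in_K_span K B r \<and> w j = a * b + r"
    using in_K_span_insert[OF insert.hyps(1,2)] insert.prems(3) by metis
  then obtain a r where ar: "\<And>j. j \<in> J \<Longrightarrow> a j \<in> K \<and> in_K_span K B (r j) \<and> w j = a j * b + r j"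
    by metis
  show ?case
  proof (cases "\<forall>j\<in>J. a j = 0")
    case True
    then have "\<forall>j\<in>J. in_K_span K B (w j)" using ar by auto
    then show ?thesis using insert.IH[of J w] insert.prems insert.hyps by simp
  next
    case False
    then obtain j0 where j0: "j0 \<in> J" "a j0 \<noteq> 0" by blast
    define J' where "J' = J - {j0}"
    have JJ: "J = insert j0 J'" "j0 \<notin> J'" "finite J'" using j0 insert.prems unfolding J'_def by auto
    have "card B < card J'" using JJ insert by simp
    moreover have "\<forall>j\<in>J'. in_K_span K B (w j - (a j / a j0) * w j0)"
    proof
      fix j assume j: "j \<in> J'"
      have eq: "w j - (a j / a j0) * w j0 = r j - (a j / a j0) * r j0"
        using ar[of j] ar[of j0] j j0 JJ by (simp add: field_simps)
      have "in_K_span K B (r j - (a j / a j0) * r j0)"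
        using ar[of j] ar[of j0] j j0 JJ by (intro in_K_span_diff in_K_span_scale) auto
      then show "in_K_span K B (w j - (a j / a j0) * w j0)" by (simp only: eq)
    qed
    ultimately obtain c where c: "\<forall>j\<in>J'. c j \<in> K" "\<exists>j\<in>J'. c j \<noteq> 0"
      "(\<Sum>j\<in>J'. c j * (w j - (a j / a j0) * w j0)) = 0"
      using insert.IH[of J' "\<lambda>j. w j - (a j / a j0) * w j0"] JJ by blast
    have "\<forall>j\<in>J'. a j / a j0 \<in> K" using ar j0 JJ by auto
    from K_dependent_insert[OF JJ(3,2) this c] show ?thesis unfolding JJ(1) .
  qed
qed

end

section \<open>Base-p digits\<close>

lemma digit_eq_mod_div: "0 < p \<Longrightarrow> digit p j x = x mod p ^ Suc j div p ^ j"
  unfolding digit_def power_Suc2 mod_mult2_eq by simp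

lemma digit_mod_power: "0 < p \<Longrightarrow> j < k \<Longrightarrow> digit p j (x mod p ^ k) = digit p j x"
  by (simp add: digit_eq_mod_div mod_mod_cancel le_imp_power_dvd del: power_Suc)

lemma digit_div_power: "digit p j (x div p ^ k) = digit p (j + k) x"
  unfolding digit_def by (simp add: div_mult2_eq[symmetric] power_add mult.commute)

lemma digit_diff_one:
  assumes p: "0 < p" and q: "1 \<le> digit p 0 q"
  shows "digit p m (q - 1) = (if m = 0 then digit p 0 q - 1 else digit p m q)"
proof (cases "m = 0")
  case True
  have "q - 1 = (q mod p - 1) + q div p * p"
    using q div_mult_mod_eq[of q p] unfolding digit_def by simp
  then have "(q - 1) mod p = (q mod p - 1) mod p" by (metis mod_mult_self1)
  also have "\<dots> = q mod p - 1" using p by (simp add: le_less_trans[OF diff_le_self])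
  finally show ?thesis using True unfolding digit_def by simp
next
  case False
  have "\<not> p ^ m dvd q" using q False unfolding digit_def by auto
  then have "0 < q mod p ^ m" by (simp add: mod_greater_zero_iff_not_dvd)
  then have "q - 1 = (q mod p ^ m - 1) + q div p ^ m * p ^ m"
    using div_mult_mod_eq[of q "p ^ m"] by linarith
  moreover have "(q mod p ^ m - 1) div p ^ m = 0" using p by (simp add: le_less_trans[OF diff_le_self])
  ultimately have "(q - 1) div p ^ m = q div p ^ m" using p by simp
  then show ?thesis using False unfolding digit_def by simp
qed

lemma digit_diff_power:
  assumes p: "0 < p" and u: "1 \<le> digit p k u"
  shows "digit p j (u - p ^ k) = (if j = k then digit p j u - 1 else digit p j u)"
proof -
  have le: "p ^ k \<le> u"
  proof (rule ccontr)
    assume "\<not> p ^ k \<le> u"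
    then show False using u unfolding digit_def by simp
  qed
  show ?thesis
  proof (cases "j < k")
    case True
    have "(u - p ^ k) mod p ^ k = u mod p ^ k" using le by (simp add: le_mod_geq)
    then show ?thesis
      using True digit_mod_power[OF p True, of "u - p ^ k"] digit_mod_power[OF p True, of u] by simp
  next
    case False
    then have jk: "j = (j - k) + k" by simp
    have "(u - p ^ k) div p ^ k = u div p ^ k - 1" using le p by (simp add: le_div_geq)
    then have "digit p j (u - p ^ k) = digit p (j - k) (u div p ^ k - 1)"
      using digit_div_power[of p "j - k" "u - p ^ k" k] jk by simp
    also have "\<dots> = (if j = k then digit p 0 (u div p ^ k) - 1 else digit p (j - k) (u div p ^ k))"
      using u digit_diff_one[OF p, of "u div p ^ k" "j - k"] digit_div_power[of p 0 u k] False by simp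
    also have "\<dots> = (if j = k then digit p j u - 1 else digit p j u)"
      using digit_div_power[of p _ u k] jk by auto
    finally show ?thesis .
  qed
qed

lemma mod_power_eq_if_digits_eq:
  "(\<forall>j<m. digit p j u = digit p j u') \<Longrightarrow> u mod p ^ m = u' mod p ^ m"
proof (induction m)
  case 0
  then show ?case by simp
next
  case (Suc m)
  have "x mod p ^ Suc m = p ^ m * digit p m x + x mod p ^ m" for x
    using mod_mult2_eq[of x "p ^ m" p] by (simp add: mult.commute digit_def)
  then show ?case using Suc by simp
qed

lemma ex_digit_neq:
  assumes "u < p ^ n" "u' < p ^ n" "u \<noteq> u'"
  shows "\<exists>i\<in>{1..n}. digit p (n - i) u \<noteq> digit p (n - i) u'"
proof (rule ccontr)
  assume same: "\<not> ?thesis"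
  have "digit p j u = digit p j u'" if "j < n" for j
  proof -
    have "n - j \<in> {1..n}" "n - (n - j) = j" using that by auto
    with same show ?thesis by force
  qed
  then have "u mod p ^ n = u' mod p ^ n" by (simp add: mod_power_eq_if_digits_eq)
  then show False using assms by simp
qed

lemma coprime_dvd_small_eq_0:
  fixes e b :: int
  assumes "q dvd e * b" "coprime b q" "\<bar>e\<bar> < \<bar>q\<bar>"
  shows "e = 0"
proof -
  have "q dvd e" using assms(1,2) by (metis coprime_commute coprime_dvd_mult_left_iff)
  then show ?thesis using assms(3) dvd_imp_le_int by force
qed

lemma frakb_add_eq_Hfun_Dfun:
  "frakb p n bs s + t = Hfun p n bs h s t + int (p ^ n) * Dfun p n bs h s t"
  unfolding Hfun_def Dfun_def using div_mult_mod_eq[of "frakb p n bs s + t - h" "int (p ^ n)"]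
  by (simp add: algebra_simps)

lemma mod_eq_in_window_imp_eq:
  fixes x y h N :: int
  assumes "x mod N = y mod N" "h \<le> x" "x < h + N" "h \<le> y" "y < h + N"
  shows "x = y"
proof -
  have "(x - h) mod N = (y - h) mod N" using assms(1) by (metis mod_diff_cong)
  moreover have "(x - h) mod N = x - h" "(y - h) mod N = y - h"
    using assms(2-5) by (simp_all add: mod_pos_pos_trivial)
  ultimately show ?thesis by simp
qed

locale shift_parameters =
  fixes p n :: nat and bs :: "nat \<Rightarrow> int"
  assumes prime_p: "prime p"
    and coprime_bs: "\<forall>i\<in>{1..n}. coprime (bs i) (int p)"
begin

lemma p_pos: "0 < p"
  using prime_p prime_gt_0_nat by blast

lemma digit_less: "digit p j u < p"
  unfolding digit_def using p_pos by simp

lemma frakb_diff: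
  "frakb p n bs u - frakb p n bs u' =
     (\<Sum>i=1..n. (int (digit p (n - i) u) - int (digit p (n - i) u')) * int p ^ (n - i) * bs i)"
  unfolding frakb_def by (simp add: sum_subtractf left_diff_distrib)

(* If u and u' differ, let m = n - i0 be the lowest digit position where they do: modulo
   p^(m+1) only the i0-th term of b(u) - b(u') survives, a nonzero digit difference times p^m
   times b_i0, which is prime to p. *)

lemma frakb_mod_inj:
  assumes u: "u < p ^ n" and u': "u' < p ^ n"
    and eq: "frakb p n bs u mod int (p ^ n) = frakb p n bs u' mod int (p ^ n)"
  shows "u = u'"
proof (rule ccontr)
  assume ne: "u \<noteq> u'"
  define D where "D = {i\<in>{1..n}. digit p (n - i) u \<noteq> digit p (n - i) u'}"
  have "D \<noteq> {}" using ex_digit_neq[OF u u' ne] unfolding D_def by blast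
  moreover have fin: "finite D" unfolding D_def by simp
  ultimately have "Max D \<in> D" by simp
  define i0 where "i0 = Max D"
  define m where "m = n - i0"
  define e where "e i = int (digit p (n - i) u) - int (digit p (n - i) u')" for i
  have i0: "i0 \<in> {1..n}" "e i0 \<noteq> 0" using \<open>Max D \<in> D\<close> unfolding i0_def D_def e_def by auto
  have e0: "e i = 0" if "i \<in> {1..n}" "i > i0" for i
    using that fin Max_ge[OF fin, of i] unfolding i0_def D_def e_def by fastforce
  have "int p ^ Suc m dvd int (p ^ n)"
    using i0 unfolding m_def of_nat_power by (intro le_imp_power_dvd) auto
  moreover have "int (p ^ n) dvd (\<Sum>i=1..n. e i * int p ^ (n - i) * bs i)"
    using eq frakb_diff[of u u'] unfolding e_def by (simp add: mod_eq_dvd_iff)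
  ultimately have "int p ^ Suc m dvd (\<Sum>i=1..n. e i * int p ^ (n - i) * bs i)"
    by (rule dvd_trans)
  moreover have "int p ^ Suc m dvd (\<Sum>i\<in>{1..n} - {i0}. e i * int p ^ (n - i) * bs i)"
  proof (rule dvd_sum)
    fix i assume i: "i \<in> {1..n} - {i0}"
    show "int p ^ Suc m dvd e i * int p ^ (n - i) * bs i"
    proof (cases "i > i0")
      case True
      then show ?thesis using e0 i by simp
    next
      case False
      then have "int p ^ Suc m dvd int p ^ (n - i)"
        using i i0 unfolding m_def by (intro le_imp_power_dvd) auto
      then show ?thesis by (simp add: dvd_mult2 dvd_mult)
    qed
  qed
  moreover have "(\<Sum>i=1..n. e i * int p ^ (n - i) * bs i) =
      e i0 * int p ^ m * bs i0 + (\<Sum>i\<in>{1..n} - {i0}. e i * int p ^ (n - i) * bs i)"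
    using i0 unfolding m_def by (simp add: sum.remove)
  ultimately have "int p ^ m * int p dvd int p ^ m * (e i0 * bs i0)"
    by (simp add: dvd_add_left_iff ac_simps)
  then have "int p dvd e i0 * bs i0" using p_pos by simp
  moreover have "\<bar>e i0\<bar> < \<bar>int p\<bar>" unfolding e_def using digit_less[of "n - i0" u] digit_less[of "n - i0" u'] by auto
  ultimately have "e i0 = 0" using coprime_bs i0(1) by (intro coprime_dvd_small_eq_0) auto
  then show False using i0 by simp
qed

lemma frakb_mod_surj: "\<exists>u<p ^ n. frakb p n bs u mod int (p ^ n) = r mod int (p ^ n)"
proof -
  define f where "f u = frakb p n bs u mod int (p ^ n)" for u
  have "inj_on f {..<p ^ n}" unfolding inj_on_def f_def using frakb_mod_inj by auto
  then have "card (f ` {..<p ^ n}) = card {0..<int (p ^ n)}"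
    by (simp add: card_image del: of_nat_power)
  moreover have "f ` {..<p ^ n} \<subseteq> {0..<int (p ^ n)}" unfolding f_def using p_pos by auto
  ultimately have "f ` {..<p ^ n} = {0..<int (p ^ n)}" by (intro card_subset_eq) auto
  moreover have "r mod int (p ^ n) \<in> {0..<int (p ^ n)}" using p_pos by auto
  ultimately obtain u where "u < p ^ n" "f u = r mod int (p ^ n)" by (metis imageE lessThan_iff)
  then show ?thesis unfolding f_def by blast
qed

lemma fraka_unique:
  assumes "u < p ^ n" "frakb p n bs u mod int (p ^ n) = (- t) mod int (p ^ n)"
  shows "fraka p n bs t = u"
proof -
  have "\<exists>!u. u < p ^ n \<and> frakb p n bs u mod int (p ^ n) = (- t) mod int (p ^ n)"
    using frakb_mod_surj frakb_mod_inj by metis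
  then show ?thesis unfolding fraka_def by (rule the1_equality) (use assms in simp)
qed

lemma fraka_less: "fraka p n bs t < p ^ n"
  and frakb_fraka: "frakb p n bs (fraka p n bs t) mod int (p ^ n) = (- t) mod int (p ^ n)"
  using frakb_mod_surj[of "- t"] fraka_unique by metis+

lemma fraka_eq_imp_mod_eq:
  assumes "fraka p n bs t1 = fraka p n bs t2"
  shows "t1 mod int (p ^ n) = t2 mod int (p ^ n)"
proof -
  have "(- t1) mod int (p ^ n) = (- t2) mod int (p ^ n)"
    using frakb_fraka[of t1] frakb_fraka[of t2] assms by simp
  then show ?thesis by (metis mod_minus_eq minus_minus)
qed

lemma frakb_diff_power:
  assumes i: "i \<in> {1..n}" and d: "1 \<le> digit p (n - i) u"
  shows "frakb p n bs (u - p ^ (n - i)) = frakb p n bs u - int p ^ (n - i) * bs i"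
proof -
  have "frakb p n bs u - frakb p n bs (u - p ^ (n - i)) =
      (\<Sum>i'=1..n. (if i' = i then int p ^ (n - i) * bs i else 0))"
    unfolding frakb_diff using i d digit_diff_power[OF p_pos d]
    by (intro sum.cong refl) (auto simp: diff_eq_diff_eq[of n _ n])
  also have "\<dots> = int p ^ (n - i) * bs i" using i by simp
  finally show ?thesis by simp
qed

lemma fraka_shift:
  assumes i: "i \<in> {1..n}" and d: "1 \<le> digit p (n - i) (fraka p n bs t)"
  shows "fraka p n bs (t + int p ^ (n - i) * bs i) = fraka p n bs t - p ^ (n - i)"
proof (rule fraka_unique)
  show "fraka p n bs t - p ^ (n - i) < p ^ n" using fraka_less[of t] by linarith
  have "frakb p n bs (fraka p n bs t - p ^ (n - i)) mod int (p ^ n)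
     = (frakb p n bs (fraka p n bs t) - int p ^ (n - i) * bs i) mod int (p ^ n)"
    using frakb_diff_power[OF i d] by simp
  also have "\<dots> = (- t - int p ^ (n - i) * bs i) mod int (p ^ n)"
    using frakb_fraka[of t] by (metis mod_diff_left_eq)
  finally show "frakb p n bs (fraka p n bs t - p ^ (n - i)) mod int (p ^ n) =
      (- (t + int p ^ (n - i) * bs i)) mod int (p ^ n)" by (simp add: algebra_simps)
qed

lemma digit_fraka_shift:
  assumes i: "i \<in> {1..n}" "i' \<in> {1..n}" and d: "1 \<le> digit p (n - i) (fraka p n bs t)"
  shows "digit p (n - i') (fraka p n bs (t + int p ^ (n - i) * bs i)) =
     (if i' = i then digit p (n - i') (fraka p n bs t) - 1 else digit p (n - i') (fraka p n bs t))"
  using fraka_shift[OF i(1) d] digit_diff_power[OF p_pos d, of "n - i'"] i by auto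

lemma bpt_spec:
  "h \<le> bpt p n bs h \<and> bpt p n bs h < h + int (p ^ n) \<and> fraka p n bs (bpt p n bs h) = p ^ n - 1"
proof -
  define N where "N = int (p ^ n)"
  define x where "x = h + (- frakb p n bs (p ^ n - 1) - h) mod N"
  have N: "N > 0" unfolding N_def using p_pos by simp
  have "(- x) mod N = frakb p n bs (p ^ n - 1) mod N"
    unfolding x_def by (simp add: mod_diff_right_eq)
  then have "fraka p n bs x = p ^ n - 1"
    using p_pos unfolding N_def by (intro fraka_unique) auto
  then have x: "h \<le> x \<and> x < h + N \<and> fraka p n bs x = p ^ n - 1" using N unfolding x_def by simp
  have "y = x" if y: "h \<le> y \<and> y < h + N \<and> fraka p n bs y = p ^ n - 1" for y
  proof (rule mod_eq_in_window_imp_eq)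
    show "y mod N = x mod N" using fraka_eq_imp_mod_eq[of y x] x y unfolding N_def by simp
  qed (use x y in auto)
  with x show ?thesis unfolding bpt_def N_def by (rule theI)
qed

lemma wfun_le_dfun:
  assumes "s < p ^ n"
  shows "wfun p n bs h s \<le> dfun p n bs h s"
proof -
  have "dfun p n bs h 0 = 0"
    using bpt_spec[of h] unfolding dfun_def Dfun_def frakb_def digit_def by (simp add: div_pos_pos_trivial)
  moreover have "prec p n s s" unfolding prec_def by simp
  ultimately have "dfun p n bs h s \<in>
      {dfun p n bs h u - dfun p n bs h (u - s) | u. u < p ^ n \<and> prec p n s u}"
    using assms by force
  then show ?thesis unfolding wfun_def by (intro Min_le) auto
qed

end

section \<open>Scaffolds\<close>

locale scaffold_setting =
  fixes K :: "'L::field set" and v :: "'L \<Rightarrow> int" and p n :: nat and \<pi> :: 'L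
    and alg :: "'L \<Rightarrow> 'A::ring_1" and act :: "'A \<Rightarrow> 'L \<Rightarrow> 'L"
    and bs :: "nat \<Rightarrow> int" and T :: enat and lam :: "int \<Rightarrow> 'L" and Psi :: "nat \<Rightarrow> 'A"
  assumes setting: "extension_setting K v p n \<pi>"
    and alg_act: "algebra_action K (p ^ n) alg act"
    and scaf: "scaffold K v act p n bs T lam Psi"

sublocale scaffold_setting \<subseteq> discrete_valuation v
  using setting unfolding extension_setting_def by unfold_locales blast

sublocale scaffold_setting \<subseteq> subfield K
  using setting unfolding extension_setting_def by unfold_locales blast

sublocale scaffold_setting \<subseteq> shift_parameters p n bs
  using setting scaf unfolding extension_setting_def scaffold_def by unfold_locales blast+

context scaffold_setting
begin

abbreviation N :: nat where "N \<equiv> p ^ n"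

abbreviation Psi_shift :: "nat \<Rightarrow> int" where "Psi_shift i \<equiv> int p ^ (n - i) * bs i"

lemma finite_K_spanning_set: "\<exists>B. finite B \<and> card B = N \<and> K_spanning K (\<lambda>x. x) B"
  and v_K_dvd: "x \<in> K \<Longrightarrow> x \<noteq> 0 \<Longrightarrow> int N dvd v x"
  and pi_in_K: "\<pi> \<in> K" and pi_nonzero: "\<pi> \<noteq> 0" and v_pi: "v \<pi> = int N"
  using setting unfolding extension_setting_def has_K_dim_def by blast+

lemma one_le_T: "1 \<le> T"
  and lam_nonzero: "lam t \<noteq> 0" and v_lam: "v (lam t) = t"
  and lam_divide_in_K: "t1 mod int N = t2 mod int N \<Longrightarrow> lam t1 / lam t2 \<in> K"
  and Psi_lam_cong: "i \<in> {1..n} \<Longrightarrow> \<exists>u\<in>unitsOK K v.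
     cong_T v T (act (Psi i) (lam t))
       (if 1 \<le> digit p (n - i) (fraka p n bs t) then u * lam (t + Psi_shift i) else 0) (lam (t + Psi_shift i))"
  using scaf unfolding scaffold_def by blast+

lemma act_mult: "act (a * b) x = act a (act b x)"
  and act_one: "act 1 x = x"
  and act_add: "act a (x + y) = act a x + act a y"
  and act_K: "c \<in> K \<Longrightarrow> act a (c * x) = c * act a x"
  and act_alg: "c \<in> K \<Longrightarrow> act (alg c) x = c * x"
  using alg_act unfolding algebra_action_def by blast+

lemma act_zero: "act a 0 = 0"
  using act_add[of a 0 0] by (metis add_cancel_right_right)

lemma act_sum: "finite F \<Longrightarrow> act a (\<Sum>k\<in>F. f k) = (\<Sum>k\<in>F. act a (f k))"
  by (induction F rule: finite_induct) (auto simp: act_zero act_add)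

lemma act_alg_mult: "c \<in> K \<Longrightarrow> act (alg c * a) x = c * act a x"
  by (simp add: act_mult act_alg)

lemma unitsOK_mult: "u \<in> unitsOK K v \<Longrightarrow> u' \<in> unitsOK K v \<Longrightarrow> u * u' \<in> unitsOK K v"
  unfolding unitsOK_def using v_mult by auto

lemma one_in_unitsOK: "1 \<in> unitsOK K v"
  unfolding unitsOK_def using v_one by simp

lemma v_K_lam_inj:
  assumes "c \<in> K" "c \<noteq> 0" "c' \<in> K" "c' \<noteq> 0" "k \<in> {0..<int N}" "k' \<in> {0..<int N}"
    and "v (c * lam k) = v (c' * lam k')"
  shows "k = k'"
proof -
  have "v c + k = v c' + k'" using assms v_mult lam_nonzero v_lam by simp
  then have "k - k' = v c' - v c" by linarith
  moreover have "int N dvd v c' - v c" using assms v_K_dvd by (simp add: dvd_diff)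
  ultimately have "int N dvd k - k'" by simp
  then have "k mod int N = k' mod int N" by (simp add: mod_eq_dvd_iff)
  with assms(5,6) show ?thesis by simp
qed

(* The nonzero terms have pairwise distinct valuations, since these lie in distinct classes
   modulo p^n; so the sum has the least of them. *)

lemma lam_sum_val_le:
  assumes cK: "\<forall>k\<in>{0..<int N}. c k \<in> K" and k0: "k0 \<in> {0..<int N}" "c k0 \<noteq> 0"
  shows "(\<Sum>k\<in>{0..<int N}. c k * lam k) \<noteq> 0 \<and>
    (\<forall>k\<in>{0..<int N}. c k \<noteq> 0 \<longrightarrow> v (\<Sum>k\<in>{0..<int N}. c k * lam k) \<le> v (c k * lam k))"
proof -
  define F where "F = {k\<in>{0..<int N}. c k \<noteq> 0}"
  have sum: "(\<Sum>k\<in>{0..<int N}. c k * lam k) = (\<Sum>k\<in>F. c k * lam k)"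
    unfolding F_def by (rule sum.mono_neutral_right) auto
  have fin: "finite F" "F \<noteq> {}"
    using k0 unfolding F_def by (auto intro: finite_subset[of _ "{0..<int N}"])
  have nonzero: "\<And>k. k \<in> F \<Longrightarrow> c k * lam k \<noteq> 0" unfolding F_def using lam_nonzero by auto
  have "inj_on (\<lambda>k. v (c k * lam k)) F"
  proof (rule inj_onI)
    fix k k' assume "k \<in> F" "k' \<in> F" "v (c k * lam k) = v (c k' * lam k')"
    then show "k = k'" using cK unfolding F_def by (auto intro!: v_K_lam_inj[of "c k" "c k'" k k'])
  qed
  then have r: "(\<Sum>k\<in>F. c k * lam k) \<noteq> 0 \<and>
      v (\<Sum>k\<in>F. c k * lam k) = Min ((\<lambda>k. v (c k * lam k)) ` F)"
    using v_sum_distinct[OF fin nonzero] by simp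
  show ?thesis
  proof (intro conjI ballI impI)
    show "(\<Sum>k\<in>{0..<int N}. c k * lam k) \<noteq> 0" using r sum by simp
    fix k assume "k \<in> {0..<int N}" "c k \<noteq> 0"
    then have "k \<in> F" unfolding F_def by simp
    then show "v (\<Sum>k\<in>{0..<int N}. c k * lam k) \<le> v (c k * lam k)" using r sum fin by simp
  qed
qed

(* lambda_0, ..., lambda_(p^n-1), x are p^n + 1 vectors in a K-space of dimension p^n, and a
   linear relation among them must involve x. *)

lemma lam_spanning: "\<exists>c. (\<forall>k\<in>{0..<int N}. c k \<in> K) \<and> x = (\<Sum>k\<in>{0..<int N}. c k * lam k)"
proof -
  obtain B where B: "finite B" "card B = N" "K_spanning K (\<lambda>x. x) B"
    using finite_K_spanning_set by blast
  define S where "S = {0..<int N}"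
  define J where "J = {0..int N}"
  define w where "w j = (if j = int N then x else lam j)" for j
  have JS: "J = insert (int N) S" "int N \<notin> S" "finite S" "finite J" unfolding J_def S_def by auto
  have "card J = N + 1" unfolding J_def by (simp del: of_nat_power add: nat_int_add)
  then have "card B < card J" using B(2) by simp
  moreover have "\<forall>j\<in>J. in_K_span K B (w j)"
    using B(3) unfolding K_spanning_def in_K_span_def by blast
  ultimately obtain c where c: "\<forall>j\<in>J. c j \<in> K" "(\<Sum>j\<in>J. c j * w j) = 0" "\<exists>j\<in>J. c j \<noteq> 0"
    using K_span_dependent[OF B(1) JS(4)] by blast
  have "(\<Sum>j\<in>J. c j * w j) = c (int N) * w (int N) + (\<Sum>j\<in>S. c j * w j)"
    using JS by simp
  also have "(\<Sum>j\<in>S. c j * w j) = (\<Sum>j\<in>S. c j * lam j)"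
    using JS unfolding w_def by (intro sum.cong) auto
  finally have rel: "c (int N) * x = - (\<Sum>j\<in>S. c j * lam j)"
    using c(2) unfolding w_def by (simp add: eq_neg_iff_add_eq_0)
  have cS: "\<forall>k\<in>S. c k \<in> K" and cN: "c (int N) \<in> K" using c(1) JS by auto
  have "c (int N) \<noteq> 0"
  proof
    assume "c (int N) = 0"
    then obtain j where "j \<in> S" "c j \<noteq> 0" using c(3) JS by auto
    then have "(\<Sum>j\<in>S. c j * lam j) \<noteq> 0" using lam_sum_val_le[of c j] cS unfolding S_def by blast
    then show False using rel \<open>c (int N) = 0\<close> by simp
  qed
  then have "x = c (int N) * x / c (int N)" by (rule nonzero_mult_div_cancel_left[symmetric])
  also have "\<dots> = (- (\<Sum>j\<in>S. c j * lam j)) / c (int N)" by (simp only: rel)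
  also have "\<dots> = (\<Sum>j\<in>S. - (c j * lam j) / c (int N))"
    by (simp only: sum_negf[symmetric] sum_divide_distrib)
  also have "\<dots> = (\<Sum>j\<in>S. (- c j / c (int N)) * lam j)"
    by (intro sum.cong refl) (simp add: field_simps)
  finally have "x = (\<Sum>j\<in>S. (- c j / c (int N)) * lam j)" .
  moreover have "\<forall>k\<in>S. - c k / c (int N) \<in> K" using cS cN by (intro ballI K_divide K_minus) auto
  ultimately show ?thesis unfolding S_def by (intro exI[of _ "\<lambda>j. - c j / c (int N)"]) auto
qed

lemma val_ge_Psi_lam:
  assumes i: "i \<in> {1..n}"
  shows "val_ge v (k + Psi_shift i) (act (Psi i) (lam k))"
proof -
  obtain u where u: "u \<in> unitsOK K v" and cong: "cong_T v T (act (Psi i) (lam k))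
      (if 1 \<le> digit p (n - i) (fraka p n bs k) then u * lam (k + Psi_shift i) else 0) (lam (k + Psi_shift i))"
    using Psi_lam_cong[OF i] by blast
  define Y where "Y = (if 1 \<le> digit p (n - i) (fraka p n bs k) then u * lam (k + Psi_shift i) else 0)"
  have "val_ge v (k + Psi_shift i + 1) (act (Psi i) (lam k) - Y)"
    using cong val_ge_T_imp_val_ge[OF one_le_T] unfolding Y_def cong_T_iff_val_ge_T v_lam by blast
  then have "val_ge v (k + Psi_shift i) (act (Psi i) (lam k) - Y)" by (rule val_ge_mono) simp
  moreover have "val_ge v (k + Psi_shift i) Y"
    using u lam_nonzero v_lam v_mult unfolding Y_def val_ge_def unitsOK_def by auto
  ultimately show ?thesis using val_ge_add by fastforce
qed

(* Expand x in the basis lambda_k: each term has valuation at least v x. *)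

lemma val_ge_Psi:
  assumes x: "val_ge v M x" and i: "i \<in> {1..n}"
  shows "val_ge v (M + Psi_shift i) (act (Psi i) x)"
proof (cases "x = 0")
  case True
  then show ?thesis by (simp add: act_zero)
next
  case False
  obtain c where c: "\<forall>k\<in>{0..<int N}. c k \<in> K" "x = (\<Sum>k\<in>{0..<int N}. c k * lam k)"
    using lam_spanning by blast
  have "act (Psi i) x = (\<Sum>k\<in>{0..<int N}. c k * act (Psi i) (lam k))"
    using c by (simp add: act_sum act_K)
  moreover have "val_ge v (M + Psi_shift i) (c k * act (Psi i) (lam k))" if k: "k \<in> {0..<int N}" for k
  proof (cases "c k = 0")
    case ck: False
    have "M \<le> v x" using x False unfolding val_ge_def by simp
    also have "v x \<le> v (c k * lam k)" using lam_sum_val_le[of c k] c k ck by auto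
    finally have "M \<le> v (c k) + k" using v_mult[OF ck lam_nonzero] v_lam by simp
    then show ?thesis by (intro val_ge_mono[OF val_ge_mult[OF val_ge_Psi_lam[OF i] ck]]) simp
  qed simp
  ultimately show ?thesis using val_ge_sum[OF finite_atLeastLessThan_int] by simp
qed

lemma val_ge_T_Psi:
  assumes "val_ge_T v x M T" "i \<in> {1..n}"
  shows "val_ge_T v (act (Psi i) x) (M + Psi_shift i) T"
proof (cases T)
  case (enat k)
  then have "val_ge v (M + int k) x" using assms(1) by simp
  from val_ge_Psi[OF this assms(2)] show ?thesis using enat by (simp add: algebra_simps)
next
  case infinity
  then show ?thesis using assms(1) by (simp add: act_zero)
qed

lemma Psi_act_approx:
  assumes i: "i \<in> {1..n}" and u: "u \<in> unitsOK K v" and x: "val_ge_T v (x - u * lam t) t T"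
  shows "val_ge_T v (act (Psi i) x - u * act (Psi i) (lam t)) (t + Psi_shift i) T"
proof -
  have "act (Psi i) x - u * act (Psi i) (lam t) = act (Psi i) (x - u * lam t)"
    using u act_add[of "Psi i" "x - u * lam t" "u * lam t"] act_K unfolding unitsOK_def by simp
  then show ?thesis using val_ge_T_Psi[OF x i] by simp
qed

lemma Psi_act_approx_digit_pos:
  assumes i: "i \<in> {1..n}" and u: "u \<in> unitsOK K v" and x: "val_ge_T v (x - u * lam t) t T"
    and d: "1 \<le> digit p (n - i) (fraka p n bs t)"
  shows "\<exists>u'\<in>unitsOK K v. val_ge_T v (act (Psi i) x - u' * lam (t + Psi_shift i)) (t + Psi_shift i) T"
proof -
  obtain u' where u': "u' \<in> unitsOK K v"
    and "val_ge_T v (act (Psi i) (lam t) - u' * lam (t + Psi_shift i)) (t + Psi_shift i) T"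
    using Psi_lam_cong[OF i, of t] d unfolding cong_T_iff_val_ge_T v_lam by auto
  then have "val_ge_T v (u * (act (Psi i) (lam t) - u' * lam (t + Psi_shift i))) (t + Psi_shift i) T"
    using u val_ge_T_mult unfolding unitsOK_def by fastforce
  from val_ge_T_add[OF Psi_act_approx[OF i u x] this]
  have "val_ge_T v (act (Psi i) x - (u * u') * lam (t + Psi_shift i)) (t + Psi_shift i) T"
    by (simp add: algebra_simps)
  then show ?thesis using unitsOK_mult[OF u u'] by blast
qed

lemma Psi_act_approx_digit_0:
  assumes i: "i \<in> {1..n}" and u: "u \<in> unitsOK K v" and x: "val_ge_T v (x - u * lam t) t T"
    and d: "digit p (n - i) (fraka p n bs t) = 0"
  shows "val_ge_T v (act (Psi i) x) (t + Psi_shift i) T"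
proof -
  have "val_ge_T v (act (Psi i) (lam t)) (t + Psi_shift i) T"
    using Psi_lam_cong[OF i, of t] d unfolding cong_T_iff_val_ge_T v_lam by auto
  then have "val_ge_T v (u * act (Psi i) (lam t)) (t + Psi_shift i) T"
    using u val_ge_T_mult unfolding unitsOK_def by fastforce
  from val_ge_T_add[OF Psi_act_approx[OF i u x] this] show ?thesis by simp
qed

subsection \<open>Words in the Psi_i\<close>

definition word_shift :: "nat list \<Rightarrow> int" where
  "word_shift w = (\<Sum>i=1..n. int (count_list w i) * Psi_shift i)"

definition word_fits :: "nat list \<Rightarrow> int \<Rightarrow> bool" where
  "word_fits w t \<longleftrightarrow> (\<forall>i\<in>{1..n}. count_list w i \<le> digit p (n - i) (fraka p n bs t))"

lemma word_shift_Nil: "word_shift [] = 0"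
  unfolding word_shift_def by simp

lemma word_shift_Cons:
  assumes "a \<in> {1..n}"
  shows "word_shift (a # w) = word_shift w + Psi_shift a"
proof -
  have "word_shift (a # w) = (\<Sum>i=1..n. int (count_list w i) * Psi_shift i + (if a = i then Psi_shift i else 0))"
    unfolding word_shift_def by (intro sum.cong refl) (auto simp: algebra_simps)
  also have "\<dots> = word_shift w + Psi_shift a" unfolding word_shift_def using assms by (simp add: sum.distrib)
  finally show ?thesis .
qed

(* The letters of a word act from right to left.  While the word fits the digits of a(t), each
   letter consumes one digit and moves the approximating lambda along; once a letter finds its
   digit exhausted, the result drops into the error term and stays there. *)

lemma word_fits_ConsD: "word_fits (a # w) t \<Longrightarrow> word_fits w t"
  unfolding word_fits_def by (auto intro: le_trans[rotated])

lemma word_act_fits: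
  assumes "set w \<subseteq> {1..n}" "word_fits w t"
  shows "(\<exists>u\<in>unitsOK K v. val_ge_T v (act (prod_list (map Psi w)) (lam t) - u * lam (t + word_shift w))
      (t + word_shift w) T) \<and>
    (\<forall>i\<in>{1..n}. digit p (n - i) (fraka p n bs (t + word_shift w)) =
      digit p (n - i) (fraka p n bs t) - count_list w i)"
  using assms
proof (induction w)
  case Nil
  have "val_ge_T v (lam t - 1 * lam t) t T" by simp
  then show ?case
    using one_in_unitsOK by (auto simp: word_shift_Nil act_one intro!: bexI[of _ 1])
next
  case (Cons a w)
  define t1 where "t1 = t + word_shift w"
  have a: "a \<in> {1..n}" and w: "set w \<subseteq> {1..n}" using Cons.prems(1) by auto
  obtain u where u: "u \<in> unitsOK K v"
    and approx: "val_ge_T v (act (prod_list (map Psi w)) (lam t) - u * lam t1) t1 T"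
    and digits: "\<forall>i\<in>{1..n}. digit p (n - i) (fraka p n bs t1) =
      digit p (n - i) (fraka p n bs t) - count_list w i"
    using Cons.IH[OF w word_fits_ConsD[OF Cons.prems(2)]] unfolding t1_def by blast
  have d: "1 \<le> digit p (n - a) (fraka p n bs t1)"
    using Cons.prems(2) digits a unfolding word_fits_def by force
  have "\<forall>i\<in>{1..n}. digit p (n - i) (fraka p n bs (t1 + Psi_shift a)) =
      digit p (n - i) (fraka p n bs t) - count_list (a # w) i"
    using digits digit_fraka_shift[OF a _ d] by auto
  moreover have "t + word_shift (a # w) = t1 + Psi_shift a" unfolding t1_def using word_shift_Cons[OF a] by simp
  ultimately show ?case using Psi_act_approx_digit_pos[OF a u approx d] by (simp add: act_mult)
qed

lemma word_act_not_fits: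
  assumes "set w \<subseteq> {1..n}" "\<not> word_fits w t"
  shows "val_ge_T v (act (prod_list (map Psi w)) (lam t)) (t + word_shift w) T"
  using assms
proof (induction w)
  case Nil
  then show ?case by (simp add: word_fits_def)
next
  case (Cons a w)
  define t1 where "t1 = t + word_shift w"
  define x where "x = act (prod_list (map Psi w)) (lam t)"
  have a: "a \<in> {1..n}" and w: "set w \<subseteq> {1..n}" using Cons.prems(1) by auto
  have "val_ge_T v (act (Psi a) x) (t1 + Psi_shift a) T"
  proof (cases "word_fits w t")
    case True
    obtain u where u: "u \<in> unitsOK K v" and approx: "val_ge_T v (x - u * lam t1) t1 T"
      and digits: "\<forall>i\<in>{1..n}. digit p (n - i) (fraka p n bs t1) =
        digit p (n - i) (fraka p n bs t) - count_list w i"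
      using word_act_fits[OF w True] unfolding x_def t1_def by blast
    obtain i where i: "i \<in> {1..n}" "digit p (n - i) (fraka p n bs t) < count_list (a # w) i"
      using Cons.prems(2) unfolding word_fits_def by (auto simp: not_le)
    then have "i = a" using True unfolding word_fits_def by (cases "i = a") (auto simp: not_le[symmetric])
    then have "digit p (n - a) (fraka p n bs t1) = 0"
      using i digits True unfolding word_fits_def by auto
    then show ?thesis using Psi_act_approx_digit_0[OF a u approx] by simp
  next
    case False
    then show ?thesis using Cons.IH[OF w] val_ge_T_Psi[OF _ a] unfolding x_def t1_def by blast
  qed
  moreover have "t + word_shift (a # w) = t1 + Psi_shift a" unfolding t1_def using word_shift_Cons[OF a] by simp
  ultimately show ?case unfolding x_def by (simp add: act_mult)
qed

lemma Upsilon_word: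
  assumes "\<Psi> \<in> Upsilon p n Psi s"
  obtains w where "set w \<subseteq> {1..n}" "\<Psi> = prod_list (map Psi w)"
    "word_shift w = frakb p n bs s" "word_fits w t \<longleftrightarrow> prec p n s (fraka p n bs t)"
proof -
  obtain w where w: "set w \<subseteq> {1..n}" "\<forall>i\<in>{1..n}. count_list w i = digit p (n - i) s"
    "\<Psi> = prod_list (map Psi w)"
    using assms unfolding Upsilon_def by blast
  have "word_shift w = frakb p n bs s"
    unfolding word_shift_def frakb_def using w(2) by (intro sum.cong refl) (simp add: mult.assoc)
  moreover have "word_fits w t \<longleftrightarrow> prec p n s (fraka p n bs t)"
  proof -
    have reindex: "(\<forall>i\<in>{1..n}. P (n - i)) \<longleftrightarrow> (\<forall>j<n. P j)" for P :: "nat \<Rightarrow> bool"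
    proof (intro iffI allI impI)
      fix j assume P: "\<forall>i\<in>{1..n}. P (n - i)" and "j < n"
      then have "n - j \<in> {1..n}" "n - (n - j) = j" by auto
      then show "P j" using P by metis
    qed auto
    have "word_fits w t \<longleftrightarrow> (\<forall>i\<in>{1..n}. digit p (n - i) s \<le> digit p (n - i) (fraka p n bs t))"
      using w(2) unfolding word_fits_def by simp
    then show ?thesis
      unfolding prec_def using reindex[of "\<lambda>j. digit p j s \<le> digit p j (fraka p n bs t)"] by simp
  qed
  ultimately show ?thesis using that w by blast
qed

lemma Upsilon_act_prec:
  assumes "\<Psi> \<in> Upsilon p n Psi s" "prec p n s (fraka p n bs t)"
  shows "\<exists>u\<in>unitsOK K v. val_ge_T v (act \<Psi> (lam t) - u * lam (t + frakb p n bs s))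
      (t + frakb p n bs s) T"
proof -
  obtain w where "set w \<subseteq> {1..n}" "\<Psi> = prod_list (map Psi w)"
    "word_shift w = frakb p n bs s" "word_fits w t"
    using Upsilon_word[OF assms(1), of t] assms(2) by blast
  then show ?thesis using word_act_fits[of w t] by simp
qed

lemma Upsilon_act_not_prec:
  assumes "\<Psi> \<in> Upsilon p n Psi s" "\<not> prec p n s (fraka p n bs t)"
  shows "val_ge_T v (act \<Psi> (lam t)) (t + frakb p n bs s) T"
proof -
  obtain w where "set w \<subseteq> {1..n}" "\<Psi> = prod_list (map Psi w)"
    "word_shift w = frakb p n bs s" "\<not> word_fits w t"
    using Upsilon_word[OF assms(1), of t] assms(2) by blast
  then show ?thesis using word_act_not_fits[of w t] by simp
qed

subsection \<open>Rescaling by powers of the uniformizer\<close>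

lemma lam_eq_unit_pi_lam:
  "\<exists>\<rho>\<in>unitsOK K v. lam (H + int N * D) = \<rho> * \<pi> powi D * lam H"
proof -
  define \<rho> where "\<rho> = lam (H + int N * D) / lam H / \<pi> powi D"
  have "lam (H + int N * D) / lam H \<in> K" by (intro lam_divide_in_K) simp
  then have "\<rho> \<in> K" unfolding \<rho>_def by (rule K_divide[OF _ K_power_int[OF pi_in_K]])
  moreover have "\<rho> \<noteq> 0" unfolding \<rho>_def using lam_nonzero pi_nonzero by simp
  moreover have "v \<rho> = 0"
    unfolding \<rho>_def using lam_nonzero pi_nonzero
    by (simp add: v_divide v_mult v_lam v_power_int v_pi)
  moreover have "lam (H + int N * D) = \<rho> * \<pi> powi D * lam H"
    unfolding \<rho>_def using lam_nonzero pi_nonzero by simp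
  ultimately show ?thesis unfolding unitsOK_def by blast
qed

lemma scaled_Upsilon_act_cong:
  assumes "\<Psi> \<in> Upsilon p n Psi s" "prec p n s (fraka p n bs t)"
  shows "\<exists>y\<in>unitsOK K v. cong_T v T (act (alg (\<pi> powi (- W)) * \<Psi>) (lam t))
      (\<pi> powi (Dfun p n bs h s t - W) * y * lam (Hfun p n bs h s t))
      (\<pi> powi (Dfun p n bs h s t - W) * lam (Hfun p n bs h s t))"
proof -
  define H D where "H = Hfun p n bs h s t" and "D = Dfun p n bs h s t"
  have shift: "t + frakb p n bs s = H + int N * D"
    unfolding H_def D_def using frakb_add_eq_Hfun_Dfun by (simp add: add.commute)
  obtain u where u: "u \<in> unitsOK K v"
    and approx: "val_ge_T v (act \<Psi> (lam t) - u * lam (H + int N * D)) (H + int N * D) T"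
    using Upsilon_act_prec[OF assms] unfolding shift by blast
  obtain \<rho> where \<rho>: "\<rho> \<in> unitsOK K v" "lam (H + int N * D) = \<rho> * \<pi> powi D * lam H"
    using lam_eq_unit_pi_lam by blast
  have pi_W: "\<pi> powi (- W) \<in> K" "\<pi> powi (- W) \<noteq> 0" using pi_in_K pi_nonzero by auto
  have "\<pi> powi (D - W) = \<pi> powi (- W) * \<pi> powi D"
    using power_int_add[of \<pi> "- W" D] pi_nonzero by simp
  then have "act (alg (\<pi> powi (- W)) * \<Psi>) (lam t) - \<pi> powi (D - W) * (u * \<rho>) * lam H
      = \<pi> powi (- W) * (act \<Psi> (lam t) - u * lam (H + int N * D))"
    using \<rho>(2) act_alg_mult[OF pi_W(1)] by (simp add: algebra_simps)
  moreover have "v (\<pi> powi (- W)) + (H + int N * D) = v (\<pi> powi (D - W) * lam H)"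
    using pi_nonzero lam_nonzero by (simp add: v_mult v_power_int v_pi v_lam algebra_simps)
  ultimately have "cong_T v T (act (alg (\<pi> powi (- W)) * \<Psi>) (lam t))
      (\<pi> powi (D - W) * (u * \<rho>) * lam H) (\<pi> powi (D - W) * lam H)"
    unfolding cong_T_iff_val_ge_T using val_ge_T_mult[OF approx pi_W(2)] by simp
  then show ?thesis unfolding H_def D_def using unitsOK_mult[OF u \<rho>(1)] by blast
qed

lemma scaled_Upsilon_act_val:
  assumes "\<Psi> \<in> Upsilon p n Psi s" "prec p n s (fraka p n bs t)"
  shows "act (alg (\<pi> powi (- W)) * \<Psi>) (lam t) \<noteq> 0 \<and>
    v (act (alg (\<pi> powi (- W)) * \<Psi>) (lam t)) = Hfun p n bs h s t + (Dfun p n bs h s t - W) * int N"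
proof -
  define m where "m = \<pi> powi (Dfun p n bs h s t - W) * lam (Hfun p n bs h s t)"
  have m: "m \<noteq> 0" "v m = Hfun p n bs h s t + (Dfun p n bs h s t - W) * int N"
    unfolding m_def using pi_nonzero lam_nonzero by (simp_all add: v_mult v_power_int v_pi v_lam)
  obtain y where y: "y \<in> unitsOK K v" and "cong_T v T (act (alg (\<pi> powi (- W)) * \<Psi>) (lam t))
      (\<pi> powi (Dfun p n bs h s t - W) * y * lam (Hfun p n bs h s t)) m"
    using scaled_Upsilon_act_cong[OF assms, of W] unfolding m_def by blast
  moreover have "\<pi> powi (Dfun p n bs h s t - W) * y * lam (Hfun p n bs h s t) = y * m"
    unfolding m_def by (simp only: mult.assoc mult.left_commute)
  ultimately have cong: "cong_T v T (act (alg (\<pi> powi (- W)) * \<Psi>) (lam t)) (y * m) m" by simp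
  have "y \<noteq> 0" "v y = 0" using y unfolding unitsOK_def by auto
  from cong_T_unit_multiple[OF one_le_T m(1) this cong] show ?thesis using m(2) by simp
qed

lemma scaled_Upsilon_act_not_prec:
  assumes "\<Psi> \<in> Upsilon p n Psi s" "\<not> prec p n s (fraka p n bs t)" "s < p ^ n"
  shows "val_ge_T v (act (alg (\<pi> powi (- wfun p n bs h s)) * \<Psi>) (lam t))
      (Hfun p n bs h s (bpt p n bs h) + t - bpt p n bs h) T"
proof -
  define W where "W = wfun p n bs h s"
  have "val_ge_T v (\<pi> powi (- W) * act \<Psi> (lam t)) (t + frakb p n bs s - W * int N) T"
    using val_ge_T_mult[OF Upsilon_act_not_prec[OF assms(1,2)], of "\<pi> powi (- W)"] pi_nonzero
    by (simp add: v_power_int v_pi algebra_simps)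
  moreover have "W * int N \<le> dfun p n bs h s * int N"
    using wfun_le_dfun[OF assms(3), of h] unfolding W_def by (intro mult_right_mono) simp_all
  then have "Hfun p n bs h s (bpt p n bs h) + t - bpt p n bs h \<le> t + frakb p n bs s - W * int N"
    using frakb_add_eq_Hfun_Dfun[of p n bs s "bpt p n bs h" h] unfolding dfun_def by (simp add: algebra_simps)
  ultimately show ?thesis
    unfolding W_def act_alg_mult[OF K_power_int[OF pi_in_K]] by (rule val_ge_T_mono)
qed

end

theorem proposition3p10:
  fixes K :: "'L::field set" and v :: "'L \<Rightarrow> int" and p n :: nat and \<pi> :: 'L
    and alg :: "'L \<Rightarrow> 'A::ring_1" and act :: "'A \<Rightarrow> 'L \<Rightarrow> 'L"
    and bs :: "nat \<Rightarrow> int" and T :: enat and lam :: "int \<Rightarrow> 'L" and Psi :: "nat \<Rightarrow> 'A"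
    and h :: int and s :: nat and t :: int and \<Psi> :: 'A
  assumes setting: "extension_setting K v p n \<pi>"
    and alg_act: "algebra_action K (p ^ n) alg act"
    and scaf: "scaffold K v act p n bs T lam Psi"
    and s_range: "s < p ^ n"
    and t_range: "h \<le> t" "t < h + int (p ^ n)"
    and Psi_mem: "\<Psi> \<in> Upsilon p n Psi s"
  defines "\<Phi> \<equiv> alg (\<pi> powi (- wfun p n bs h s)) * \<Psi>"
  shows
    "(prec p n s (fraka p n bs t) \<longrightarrow>
       (\<exists>y\<in>unitsOK K v.
          cong_T v T (act \<Phi> (lam t))
            (\<pi> powi (epsfun p n bs h s t) * y * lam (Hfun p n bs h s t))
            (\<pi> powi (epsfun p n bs h s t) * lam (Hfun p n bs h s t))) \<and>
       (epsfun p n bs h s t = 0 \<longrightarrow>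
          act \<Phi> (lam t) \<noteq> 0 \<and> v (act \<Phi> (lam t)) = Hfun p n bs h s t) \<and>
       (epsfun p n bs h s t = 1 \<longrightarrow>
          act \<Phi> (lam t) \<noteq> 0 \<and> v (act \<Phi> (lam t)) = Hfun p n bs h s t + int (p ^ n))) \<and>
     (\<not> prec p n s (fraka p n bs t) \<longrightarrow>
       val_ge_T v (act \<Phi> (lam t))
         (Hfun p n bs h s (bpt p n bs h) + t - bpt p n bs h) T)"
proof -
  interpret scaffold_setting K v p n \<pi> alg act bs T lam Psi
    using setting alg_act scaf by (rule scaffold_setting.intro)
  have eps: "epsfun p n bs h s t = Dfun p n bs h s t - wfun p n bs h s"
    unfolding epsfun_def ..
  let ?W = "wfun p n bs h s"
  show ?thesis
    unfolding \<Phi>_def eps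
    using scaled_Upsilon_act_cong[OF Psi_mem, of t ?W h] scaled_Upsilon_act_val[OF Psi_mem, of t ?W h]
      scaled_Upsilon_act_not_prec[OF Psi_mem _ s_range, of t h]
    by auto
qed

end
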